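(* Let $k$ be a difference field of characteristic $0$, $R=k\{y_1,\ldots,y_n\}$, $S\subseteq\mathbb{N}[x]^n$, and $I=\langle \mathbf{y}^{\mathbf{u}}:\mathbf{u}\in S\rangle_r$. Then there exist $\mathbf{b}_1,\ldots,\mathbf{b}_s\in(\mathbb{N}\cup\{-1\})^n$ such that \[I=\mathfrak{m}^{\mathbf{b}_1}\cap\cdots\cap\mathfrak{m}^{\mathbf{b}_s}.\] Moreover, if such a decomposition is irredundant, then it is unique (i.e. any two irredundant decompositions of this form have the same set of intersectands).
   Context: A difference field is a field $k$ with a ring endomorphism $\sigma$. $R=k\{y_1,\ldots,y_n\}$ is the polynomial ring over $k$ in the variables $\sigma^j(y_i)$ ($1\le i\le n$, $j\ge0$), with $\sigma$ extended naturally. For $p=\sum_i c_ix^i\in\mathbb{N}[x]$ and $a\in R$, $a^p=\prod_i(\sigma^i(a))^{c_i}$; for $\mathbf{u}\in\mathbb{N}[x]^n$, $\mathbf{y}^{\mathbf{u}}=y_1^{u_1}\cdots y_n^{u_n}$. A $\sigma$-ideal is an ideal $I$ with $\sigma(I)\subseteq I$; it is well-mixed if $ab\in I$ implies $a\sigma(b)\in I$. $\langle F\rangle_r$ denotes the smallest radical well-mixed $\sigma$-ideal containing $F$. For $\mathbf{b}=(b_1,\ldots,b_n)\in(\mathbb{N}\cup\{-1\})^n$, $\mathfrak{m}^{\mathbf{b}}$ is the $\sigma$-ideal generated by $\{\sigma^{b_i}(y_i): b_i\neq -1\}$ (i.e. by $y_i^{x^{b_i}}$ for $b_i\ne-1$).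 *)

theory Defs
  imports "HOL-Library.Poly_Mapping" "HOL-Computational_Algebra.Polynomial"
begin

text \<open>Difference polynomial ring R = k{y_i : i in 'n}: polynomials over k in the
  variables sigma^j(y_i), encoded as the pair (i, j).\<close>

type_synonym ('n, 'a) dpoly = "(('n \<times> nat) \<Rightarrow>\<^sub>0 nat) \<Rightarrow>\<^sub>0 'a"

definition dvar :: "'n \<Rightarrow> nat \<Rightarrow> ('n, 'a::comm_ring_1) dpoly" where
  "dvar i j = Poly_Mapping.single (Poly_Mapping.single (i, j) 1) 1"

definition ring_endo :: "('a::field \<Rightarrow> 'a) \<Rightarrow> bool" where
  "ring_endo \<sigma> \<longleftrightarrow> \<sigma> 1 = 1 \<and> (\<forall>a b. \<sigma> (a + b) = \<sigma> a + \<sigma> b) \<and> (\<forall>a b. \<sigma> (a * b) = \<sigma> a * \<sigma> b)"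

definition shift_mon :: "(('n \<times> nat) \<Rightarrow>\<^sub>0 nat) \<Rightarrow> (('n \<times> nat) \<Rightarrow>\<^sub>0 nat)" where
  "shift_mon m = (\<Sum>v\<in>Poly_Mapping.keys m. Poly_Mapping.single (fst v, Suc (snd v)) (Poly_Mapping.lookup m v))"

definition sigmaR :: "('a::field \<Rightarrow> 'a) \<Rightarrow> ('n, 'a) dpoly \<Rightarrow> ('n, 'a) dpoly" where
  "sigmaR \<sigma> p = (\<Sum>m\<in>Poly_Mapping.keys p. Poly_Mapping.single (shift_mon m) (\<sigma> (Poly_Mapping.lookup p m)))"

definition is_ideal :: "('n, 'a::field) dpoly set \<Rightarrow> bool" where
  "is_ideal I \<longleftrightarrow> 0 \<in> I \<and> (\<forall>a\<in>I. \<forall>b\<in>I. a + b \<in> I) \<and> (\<forall>a\<in>I. \<forall>r. r * a \<in> I)"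

definition sigma_ideal :: "('a::field \<Rightarrow> 'a) \<Rightarrow> ('n, 'a) dpoly set \<Rightarrow> bool" where
  "sigma_ideal \<sigma> I \<longleftrightarrow> is_ideal I \<and> (\<forall>a\<in>I. sigmaR \<sigma> a \<in> I)"

definition well_mixed :: "('a::field \<Rightarrow> 'a) \<Rightarrow> ('n, 'a) dpoly set \<Rightarrow> bool" where
  "well_mixed \<sigma> I \<longleftrightarrow> (\<forall>a b. a * b \<in> I \<longrightarrow> a * sigmaR \<sigma> b \<in> I)"

definition radical_set :: "('n, 'a::field) dpoly set \<Rightarrow> bool" where
  "radical_set I \<longleftrightarrow> (\<forall>a (k::nat). k \<ge> 1 \<longrightarrow> a ^ k \<in> I \<longrightarrow> a \<in> I)"

definition rwm_closure :: "('a::field \<Rightarrow> 'a) \<Rightarrow> ('n, 'a) dpoly set \<Rightarrow> ('n, 'a) dpoly set" where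
  "rwm_closure \<sigma> F = \<Inter>{I. sigma_ideal \<sigma> I \<and> well_mixed \<sigma> I \<and> radical_set I \<and> F \<subseteq> I}"

definition sigma_gen :: "('a::field \<Rightarrow> 'a) \<Rightarrow> ('n, 'a) dpoly set \<Rightarrow> ('n, 'a) dpoly set" where
  "sigma_gen \<sigma> G = \<Inter>{I. sigma_ideal \<sigma> I \<and> G \<subseteq> I}"

definition ymon :: "('n::finite \<Rightarrow> nat poly) \<Rightarrow> ('n, 'a::field) dpoly" where
  "ymon u = (\<Prod>i\<in>UNIV. \<Prod>j\<le>degree (u i). dvar i j ^ coeff (u i) j)"

text \<open>m^b for b in (N \<union> {-1})^n, encoded as b :: 'n \<Rightarrow> int with b i \<ge> -1\<close>
definition valid_b :: "('n \<Rightarrow> int) \<Rightarrow> bool" where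
  "valid_b b \<longleftrightarrow> (\<forall>i. b i \<ge> -1)"

definition mb :: "('a::field \<Rightarrow> 'a) \<Rightarrow> ('n \<Rightarrow> int) \<Rightarrow> ('n, 'a) dpoly set" where
  "mb \<sigma> b = sigma_gen \<sigma> {dvar i (nat (b i)) | i. b i \<noteq> -1}"

end

theory Submission
  imports Defs "HOL-Library.Countable"
begin

text \<open>The ideal \<open>\<mathfrak>m\<^sup>b\<close> is spanned by the monomials containing some \<open>\<sigma>\<^sup>j(y\<^sub>i)\<close> with
  \<open>j \<ge> b\<^sub>i\<close>. It is a prime \<open>\<sigma>\<close>-ideal, hence radical and well-mixed, so \<open>I\<close> lies in every
  \<open>\<mathfrak>m\<^sup>b\<close> containing the generators \<open>y\<^sup>u\<close>. Conversely, well-mixedness lets the variables of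
  \<open>y\<^sup>u \<in> I\<close> be shifted upwards, so by radicality \<open>I\<close> contains every monomial that has, for
  each \<open>i\<close> with \<open>u\<^sub>i \<noteq> 0\<close>, a variable \<open>\<sigma>\<^sup>j(y\<^sub>i)\<close> with \<open>j \<ge> deg u\<^sub>i\<close>. By Dickson's lemma
  finitely many \<open>u\<close> suffice, and a monomial covering none of them is avoided by an
  \<open>\<mathfrak>m\<^sup>b\<close> containing all generators whose components are \<open>-1\<close> or degrees of
  components of those \<open>u\<close>; there are finitely many such \<open>b\<close>. Uniqueness is the usual
  argument for irredundant finite intersections of prime ideals.\<close>

section \<open>Polynomial rings in countably many variables are domains\<close>

definition push_keys :: "('k \<Rightarrow> 'l) \<Rightarrow> ('k \<Rightarrow>\<^sub>0 'b::comm_monoid_add) \<Rightarrow> 'l \<Rightarrow>\<^sub>0 'b" where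
  "push_keys g p = (\<Sum>v\<in>Poly_Mapping.keys p. Poly_Mapping.single (g v) (Poly_Mapping.lookup p v))"

lemma poly_mapping_sum_single:
  "p = (\<Sum>v\<in>Poly_Mapping.keys p. Poly_Mapping.single v (Poly_Mapping.lookup p v))"
  by (rule poly_mapping_eqI)
    (auto simp: lookup_sum lookup_single when_def in_keys_iff sum.delta'
      simp del: lookup_not_eq_zero_eq_in_keys)

lemma lookup_push_keys:
  assumes "inj g"
  shows "Poly_Mapping.lookup (push_keys g p) k
    = (if k \<in> range g then Poly_Mapping.lookup p (inv g k) else 0)"
proof -
  have "Poly_Mapping.lookup (push_keys g p) k
      = (\<Sum>v\<in>Poly_Mapping.keys p. Poly_Mapping.lookup p v when g v = k)"
    by (simp add: push_keys_def lookup_sum lookup_single)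
  also have "\<dots> = (if k \<in> range g then Poly_Mapping.lookup p (inv g k) else 0)"
  proof (cases "k \<in> range g")
    case True
    then obtain v where v: "k = g v" by auto
    have "(\<Sum>w\<in>Poly_Mapping.keys p. Poly_Mapping.lookup p w when g w = k)
        = (\<Sum>w\<in>Poly_Mapping.keys p. if w = v then Poly_Mapping.lookup p w else 0)"
      using assms v by (intro sum.cong) (auto simp: when_def inj_eq)
    also have "\<dots> = Poly_Mapping.lookup p v"
      by (simp add: sum.delta' in_keys_iff)
    finally show ?thesis using v assms by simp
  qed (auto simp: when_def intro!: sum.neutral)
  finally show ?thesis .
qed

lemma push_keys_zero [simp]: "push_keys g 0 = 0"
  by (simp add: push_keys_def)

lemma lookup_push_keys_image:
  "inj g \<Longrightarrow> Poly_Mapping.lookup (push_keys g p) (g k) = Poly_Mapping.lookup p k"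
  by (simp add: lookup_push_keys)

context
  fixes g :: "'k \<Rightarrow> 'l"
  assumes inj_g: "inj g"
begin

lemma push_keys_add: "push_keys g (p + q) = push_keys g p + push_keys g q"
  by (rule poly_mapping_eqI) (simp add: lookup_push_keys[OF inj_g] lookup_add)

lemma push_keys_sum: "push_keys g (sum f A) = (\<Sum>x\<in>A. push_keys g (f x))"
  by (induction A rule: infinite_finite_induct) (simp_all add: push_keys_add)

lemma push_keys_single: "push_keys g (Poly_Mapping.single k a) = Poly_Mapping.single (g k) a"
proof (rule poly_mapping_eqI)
  fix l
  show "Poly_Mapping.lookup (push_keys g (Poly_Mapping.single k a)) l
      = Poly_Mapping.lookup (Poly_Mapping.single (g k) a) l"
    by (cases "l \<in> range g")
      (auto simp: lookup_push_keys[OF inj_g] lookup_single when_def inj_eq[OF inj_g] inv_f_f[OF inj_g])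
qed

lemma inj_push_keys: "inj (push_keys g)"
proof (rule injI)
  fix p q :: "'k \<Rightarrow>\<^sub>0 'b::comm_monoid_add"
  assume "push_keys g p = push_keys g q"
  then have "Poly_Mapping.lookup (push_keys g p) (g k) = Poly_Mapping.lookup (push_keys g q) (g k)" for k
    by simp
  then show "p = q"
    by (intro poly_mapping_eqI) (simp add: lookup_push_keys_image[OF inj_g])
qed

end

lemma push_keys_mult:
  fixes g :: "'k \<Rightarrow> 'l" and p q :: "('k \<Rightarrow>\<^sub>0 nat) \<Rightarrow>\<^sub>0 'a::comm_ring_1"
  assumes inj_g: "inj g"
  shows "push_keys (push_keys g) (p * q) = push_keys (push_keys g) p * push_keys (push_keys g) q"
proof -
  have inj_pg: "inj (push_keys g :: ('k \<Rightarrow>\<^sub>0 nat) \<Rightarrow> _)"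
    by (rule inj_push_keys[OF inj_g])
  have expand: "r * s = (\<Sum>v\<in>Poly_Mapping.keys r. \<Sum>w\<in>Poly_Mapping.keys s.
      Poly_Mapping.single (v + w) (Poly_Mapping.lookup r v * Poly_Mapping.lookup s w))"
    for r s :: "('c \<Rightarrow>\<^sub>0 nat) \<Rightarrow>\<^sub>0 'a"
    by (subst poly_mapping_sum_single[of r], subst poly_mapping_sum_single[of s])
      (simp add: sum_distrib_left sum_distrib_right mult_single sum.swap[of _ "Poly_Mapping.keys s"])
  show ?thesis
    unfolding expand[of p q] push_keys_def[of "push_keys g" p] push_keys_def[of "push_keys g" q]
    by (simp add: push_keys_sum[OF inj_pg] push_keys_single[OF inj_pg] push_keys_add[OF inj_g]
        sum_distrib_left sum_distrib_right mult_single sum.swap[of _ "Poly_Mapping.keys q"])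
qed

text \<open>Renaming the variables injectively into \<open>nat\<close> lands in a ring that the library
  already knows to be a domain.\<close>

lemma poly_mapping_mult_eq_0:
  fixes p q :: "('k::countable \<Rightarrow>\<^sub>0 nat) \<Rightarrow>\<^sub>0 'a::idom"
  assumes "p * q = 0"
  shows "p = 0 \<or> q = 0"
proof -
  have inj_nat: "inj (to_nat :: 'k \<Rightarrow> nat)"
    by simp
  let ?h = "push_keys (push_keys (to_nat :: 'k \<Rightarrow> nat))"
  have "?h p * ?h q = 0"
    using push_keys_mult[OF inj_nat, of p q] assms by simp
  then have "?h p = 0 \<or> ?h q = 0"
    by simp
  then show ?thesis
    using inj_push_keys[OF inj_push_keys[OF inj_nat]] by (metis injD push_keys_zero)
qed

section \<open>Ideals generated by variables\<close>

definition mentions :: "'k set \<Rightarrow> ('k \<Rightarrow>\<^sub>0 nat) \<Rightarrow> bool" where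
  "mentions V m \<longleftrightarrow> Poly_Mapping.keys m \<inter> V \<noteq> {}"

text \<open>This is the ideal generated by the variables in \<open>V\<close>.\<close>

definition var_ideal :: "'k set \<Rightarrow> (('k \<Rightarrow>\<^sub>0 nat) \<Rightarrow>\<^sub>0 'a::comm_ring_1) set" where
  "var_ideal V = {p. \<forall>m\<in>Poly_Mapping.keys p. mentions V m}"

lemma keys_add_nat:
  "Poly_Mapping.keys ((m :: 'k \<Rightarrow>\<^sub>0 nat) + n) = Poly_Mapping.keys m \<union> Poly_Mapping.keys n"
  by (auto simp: in_keys_iff lookup_add)

lemma mentions_add: "mentions V (m + n) \<longleftrightarrow> mentions V m \<or> mentions V n"
  by (auto simp: mentions_def keys_add_nat)

lemma zero_mem_var_ideal: "0 \<in> var_ideal V"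
  by (simp add: var_ideal_def)

lemma one_not_mem_var_ideal: "1 \<notin> var_ideal V"
  by (simp add: var_ideal_def mentions_def)

lemma add_mem_var_ideal: "p \<in> var_ideal V \<Longrightarrow> q \<in> var_ideal V \<Longrightarrow> p + q \<in> var_ideal V"
  using keys_add[of p q] unfolding var_ideal_def by blast

lemma mult_mem_var_ideal:
  assumes "p \<in> var_ideal V"
  shows "r * p \<in> var_ideal V" "p * r \<in> var_ideal V"
proof -
  have "mentions V m" if m: "m \<in> Poly_Mapping.keys (r * p)" for m
  proof -
    obtain x y where "m = x + y" "y \<in> Poly_Mapping.keys p"
      using subsetD[OF keys_mult[of r p] m] by blast
    then show ?thesis
      using assms by (auto simp: var_ideal_def mentions_add)
  qed
  then show "r * p \<in> var_ideal V"
    by (simp add: var_ideal_def)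
  then show "p * r \<in> var_ideal V"
    by (simp add: mult.commute)
qed

lemma diff_mem_var_ideal: "p \<in> var_ideal V \<Longrightarrow> q \<in> var_ideal V \<Longrightarrow> p - q \<in> var_ideal V"
  using add_mem_var_ideal[of p V "-1 * q"] mult_mem_var_ideal(1)[of q V "-1"] by simp

definition avoiding_part :: "'k set \<Rightarrow> (('k \<Rightarrow>\<^sub>0 nat) \<Rightarrow>\<^sub>0 'a::comm_ring_1) \<Rightarrow> ('k \<Rightarrow>\<^sub>0 nat) \<Rightarrow>\<^sub>0 'a" where
  "avoiding_part V p = Abs_poly_mapping (\<lambda>m. if mentions V m then 0 else Poly_Mapping.lookup p m)"

lemma lookup_avoiding_part:
  "Poly_Mapping.lookup (avoiding_part V p) m = (if mentions V m then 0 else Poly_Mapping.lookup p m)"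
proof -
  have "{m. (if mentions V m then 0 else Poly_Mapping.lookup p m) \<noteq> 0} \<subseteq> Poly_Mapping.keys p"
    by (auto simp: in_keys_iff)
  then show ?thesis
    unfolding avoiding_part_def by (simp add: lookup_Abs_poly_mapping finite_subset)
qed

lemma diff_avoiding_part_mem: "p - avoiding_part V p \<in> var_ideal V"
  by (auto simp: var_ideal_def in_keys_iff lookup_minus lookup_avoiding_part split: if_splits)

lemma keys_avoiding_part: "m \<in> Poly_Mapping.keys (avoiding_part V p) \<Longrightarrow> \<not> mentions V m"
  by (auto simp: in_keys_iff lookup_avoiding_part)

text \<open>Modulo \<open>var_ideal V\<close> a product is congruent to the product of the avoiding parts,
  whose monomials avoid \<open>V\<close>; so it lies in the ideal only if it vanishes.\<close>

lemma var_ideal_prime: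
  fixes p q :: "('k::countable \<Rightarrow>\<^sub>0 nat) \<Rightarrow>\<^sub>0 'a::idom"
  assumes "p * q \<in> var_ideal V"
  shows "p \<in> var_ideal V \<or> q \<in> var_ideal V"
proof -
  let ?p = "avoiding_part V p" and ?q = "avoiding_part V q"
  have "?p * ?q = p * q - (p - ?p) * q - ?p * (q - ?q)"
    by (simp add: algebra_simps)
  also have "\<dots> \<in> var_ideal V"
    using assms diff_avoiding_part_mem[of p V] diff_avoiding_part_mem[of q V]
    by (blast intro: diff_mem_var_ideal mult_mem_var_ideal)
  finally have in_ideal: "?p * ?q \<in> var_ideal V" .
  have "Poly_Mapping.keys (?p * ?q) = {}"
  proof (rule equals0I)
    fix m
    assume m: "m \<in> Poly_Mapping.keys (?p * ?q)"
    then obtain x y where "m = x + y" "x \<in> Poly_Mapping.keys ?p" "y \<in> Poly_Mapping.keys ?q"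
      using subsetD[OF keys_mult[of ?p ?q] m] by blast
    then have "\<not> mentions V m"
      by (simp add: mentions_add keys_avoiding_part)
    with in_ideal m show False
      by (simp add: var_ideal_def)
  qed
  then have "?p = 0 \<or> ?q = 0"
    by (simp add: poly_mapping_mult_eq_0)
  then show ?thesis
    using diff_avoiding_part_mem[of p V] diff_avoiding_part_mem[of q V] by auto
qed

lemma prod_mem_var_ideal:
  fixes f :: "'b \<Rightarrow> ('k::countable \<Rightarrow>\<^sub>0 nat) \<Rightarrow>\<^sub>0 'a::idom"
  assumes "finite A" "prod f A \<in> var_ideal V"
  shows "\<exists>x\<in>A. f x \<in> var_ideal V"
  using assms
  by (induction A rule: finite_induct) (auto simp: one_not_mem_var_ideal dest: var_ideal_prime)

lemma power_mem_var_ideal: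
  fixes p :: "('k::countable \<Rightarrow>\<^sub>0 nat) \<Rightarrow>\<^sub>0 'a::idom"
  assumes "p ^ n \<in> var_ideal V"
  shows "p \<in> var_ideal V"
  using prod_mem_var_ideal[of "{..<n}" "\<lambda>_. p"] assms by auto

section \<open>The ideals \<open>\<mathfrak>m\<^sup>b\<close>\<close>

lemma inj_shift_var: "inj (\<lambda>(i, j). (i, Suc j))"
  by (auto intro: injI)

lemma keys_shift_mon:
  assumes "(i, j) \<in> Poly_Mapping.keys m"
  shows "(i, Suc j) \<in> Poly_Mapping.keys (shift_mon m)"
proof -
  have "shift_mon m = push_keys (\<lambda>(i, j). (i, Suc j)) m"
    by (simp add: shift_mon_def push_keys_def case_prod_beta)
  then show ?thesis
    using assms lookup_push_keys_image[OF inj_shift_var, of m "(i, j)"] by (simp add: in_keys_iff)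
qed

lemma keys_sigmaR: "Poly_Mapping.keys (sigmaR \<sigma> p) \<subseteq> shift_mon ` Poly_Mapping.keys p"
proof -
  have "Poly_Mapping.keys (sigmaR \<sigma> p) \<subseteq> (\<Union>m\<in>Poly_Mapping.keys p.
      Poly_Mapping.keys (Poly_Mapping.single (shift_mon m) (\<sigma> (Poly_Mapping.lookup p m))))"
    unfolding sigmaR_def by (rule keys_sum)
  then show ?thesis
    by auto
qed

lemma sigmaR_dvar:
  assumes "\<sigma> 1 = 1"
  shows "sigmaR \<sigma> (dvar i j) = dvar i (Suc j)"
proof -
  have "shift_mon (Poly_Mapping.single (i, j) 1) = Poly_Mapping.single (i, Suc j) 1"
    by (simp add: shift_mon_def)
  then show ?thesis
    using assms by (simp add: sigmaR_def dvar_def)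
qed

context
  fixes V :: "('n \<times> nat) set"
  assumes shift_closed: "\<And>i j. (i, j) \<in> V \<Longrightarrow> (i, Suc j) \<in> V"
begin

lemma mentions_shift_mon: "mentions V m \<Longrightarrow> mentions V (shift_mon m)"
  unfolding mentions_def using keys_shift_mon shift_closed by fast

lemma sigmaR_mem_var_ideal: "p \<in> var_ideal V \<Longrightarrow> sigmaR \<sigma> p \<in> var_ideal V"
  using keys_sigmaR[of \<sigma> p] mentions_shift_mon unfolding var_ideal_def by blast

lemma sigma_ideal_var_ideal: "sigma_ideal \<sigma> (var_ideal V)"
  by (simp add: sigma_ideal_def is_ideal_def zero_mem_var_ideal add_mem_var_ideal
      mult_mem_var_ideal sigmaR_mem_var_ideal)

end

lemma well_mixed_var_ideal:
  fixes V :: "('n::countable \<times> nat) set"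
  assumes "\<And>i j. (i, j) \<in> V \<Longrightarrow> (i, Suc j) \<in> V"
  shows "well_mixed \<sigma> (var_ideal V :: ('n, 'a::field) dpoly set)"
  unfolding well_mixed_def
  by (metis assms var_ideal_prime mult_mem_var_ideal sigmaR_mem_var_ideal)

lemma radical_set_var_ideal: "radical_set (var_ideal V :: ('n::countable, 'a::field) dpoly set)"
  by (simp add: radical_set_def power_mem_var_ideal)

lemma dvd_mem_ideal: "is_ideal J \<Longrightarrow> a \<in> J \<Longrightarrow> a dvd b \<Longrightarrow> b \<in> J"
  by (auto simp: is_ideal_def mult.commute elim!: dvdE)

lemma sum_mem_ideal: "is_ideal J \<Longrightarrow> (\<And>x. x \<in> A \<Longrightarrow> f x \<in> J) \<Longrightarrow> sum f A \<in> J"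
  by (induction A rule: infinite_finite_induct) (auto simp: is_ideal_def)

lemma dvar_dvd_single:
  assumes "(i, j) \<in> Poly_Mapping.keys m"
  shows "dvar i j dvd Poly_Mapping.single m c"
proof
  have "m = (m - Poly_Mapping.single (i, j) 1) + Poly_Mapping.single (i, j) 1"
    using assms by (intro poly_mapping_eqI) (auto simp: lookup_add lookup_minus lookup_single in_keys_iff when_def)
  then show "Poly_Mapping.single m c = dvar i j * Poly_Mapping.single (m - Poly_Mapping.single (i, j) 1) c"
    unfolding dvar_def by (metis mult.commute mult.right_neutral mult_single)
qed

lemma dvar_mem_var_ideal: "(i, j) \<in> V \<Longrightarrow> dvar i j \<in> var_ideal V"
  by (simp add: dvar_def var_ideal_def mentions_def)

lemma var_ideal_subset_ideal:
  fixes J :: "('n, 'a::field) dpoly set"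
  assumes J: "is_ideal J" and dvars: "\<And>i j. (i, j) \<in> V \<Longrightarrow> dvar i j \<in> J"
  shows "var_ideal V \<subseteq> J"
proof
  fix p :: "('n, 'a) dpoly"
  assume p: "p \<in> var_ideal V"
  have "Poly_Mapping.single m (Poly_Mapping.lookup p m) \<in> J" if m: "m \<in> Poly_Mapping.keys p" for m
  proof -
    obtain v where "v \<in> Poly_Mapping.keys m" "v \<in> V"
      using p m unfolding var_ideal_def mentions_def by blast
    moreover obtain i j where "v = (i, j)"
      by fastforce
    ultimately show ?thesis
      using J dvars dvar_dvd_single dvd_mem_ideal by metis
  qed
  then have "(\<Sum>m\<in>Poly_Mapping.keys p. Poly_Mapping.single m (Poly_Mapping.lookup p m)) \<in> J"
    by (rule sum_mem_ideal[OF J])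
  then show "p \<in> J"
    by (simp flip: poly_mapping_sum_single)
qed

lemma dvar_mem_sigma_ideal:
  assumes J: "sigma_ideal \<sigma> J" and \<sigma>1: "\<sigma> 1 = 1" and "dvar i j \<in> J" "j \<le> j'"
  shows "dvar i j' \<in> J"
  using \<open>j \<le> j'\<close>
proof (induction j' rule: dec_induct)
  case (step k)
  then have "sigmaR \<sigma> (dvar i k) \<in> J"
    using J by (simp add: sigma_ideal_def)
  then show ?case
    by (simp add: sigmaR_dvar[of \<sigma>, OF \<sigma>1])
qed (rule \<open>dvar i j \<in> J\<close>)

text \<open>The variables \<open>\<sigma>\<^sup>j(y\<^sub>i)\<close> with \<open>j \<ge> b\<^sub>i\<close>, which generate \<open>\<mathfrak>m\<^sup>b\<close> as an ideal;
  a component \<open>b\<^sub>i = -1\<close> contributes none.\<close>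

definition mb_vars :: "('n \<Rightarrow> int) \<Rightarrow> ('n \<times> nat) set" where
  "mb_vars b = {(i, j). 0 \<le> b i \<and> b i \<le> int j}"

lemma mb_eq_var_ideal:
  assumes endo: "ring_endo \<sigma>" and b: "valid_b b"
  shows "mb \<sigma> b = var_ideal (mb_vars b)"
proof
  have shift_closed: "(i, j) \<in> mb_vars b \<Longrightarrow> (i, Suc j) \<in> mb_vars b" for i j
    by (simp add: mb_vars_def)
  have "(i, nat (b i)) \<in> mb_vars b" if "b i \<noteq> -1" for i
    using b that by (simp add: valid_b_def mb_vars_def) (smt (verit))
  then have "{dvar i (nat (b i)) | i. b i \<noteq> -1} \<subseteq> var_ideal (mb_vars b)"
    by (auto intro: dvar_mem_var_ideal)
  then show "mb \<sigma> b \<subseteq> var_ideal (mb_vars b)"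
    unfolding mb_def sigma_gen_def using sigma_ideal_var_ideal[OF shift_closed] by blast
  show "var_ideal (mb_vars b) \<subseteq> mb \<sigma> b"
    unfolding mb_def sigma_gen_def
  proof (intro Inter_greatest)
    fix J
    assume "J \<in> {J. sigma_ideal \<sigma> J \<and> {dvar i (nat (b i)) | i. b i \<noteq> -1} \<subseteq> J}"
    then have J: "sigma_ideal \<sigma> J" and gens: "{dvar i (nat (b i)) | i. b i \<noteq> -1} \<subseteq> J"
      by auto
    have "dvar i j \<in> J" if "(i, j) \<in> mb_vars b" for i j
    proof (rule dvar_mem_sigma_ideal[OF J])
      show "\<sigma> 1 = 1"
        using endo by (simp add: ring_endo_def)
      have "b i \<noteq> -1"
        using that by (simp add: mb_vars_def)
      then show "dvar i (nat (b i)) \<in> J"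
        using gens by blast
      show "nat (b i) \<le> j"
        using that by (simp add: mb_vars_def nat_le_iff)
    qed
    then show "var_ideal (mb_vars b) \<subseteq> J"
      using J by (intro var_ideal_subset_ideal) (auto simp: sigma_ideal_def)
  qed
qed

section \<open>Monomials in well-mixed radical ideals\<close>

lemma dvar_power: "dvar i j ^ k = Poly_Mapping.single (Poly_Mapping.single (i, j) k) 1"
  by (induction k) (simp_all add: dvar_def mult_single flip: single_add)

lemma prod_single_one:
  "(\<Prod>x\<in>A. Poly_Mapping.single (f x) (1::'a::comm_ring_1)) = Poly_Mapping.single (\<Sum>x\<in>A. f x) 1"
  by (induction A rule: infinite_finite_induct) (simp_all add: mult_single)

definition ymon_exp :: "('n::finite \<Rightarrow> nat poly) \<Rightarrow> ('n \<times> nat) \<Rightarrow>\<^sub>0 nat" where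
  "ymon_exp u = (\<Sum>i\<in>UNIV. \<Sum>j\<le>degree (u i). Poly_Mapping.single (i, j) (coeff (u i) j))"

lemma ymon_eq_single: "ymon u = Poly_Mapping.single (ymon_exp u) 1"
  by (simp add: ymon_def ymon_exp_def dvar_power prod_single_one)

lemma lookup_ymon_exp: "Poly_Mapping.lookup (ymon_exp u) (i, j) = coeff (u i) j"
proof -
  have "Poly_Mapping.lookup (ymon_exp u) (i, j)
      = (\<Sum>i'\<in>UNIV. if i' = i then \<Sum>j'\<le>degree (u i). if j' = j then coeff (u i) j' else 0 else 0)"
    unfolding ymon_exp_def lookup_sum lookup_single
    by (intro sum.cong) (auto simp: when_def)
  then show ?thesis
    by (simp add: coeff_eq_0)
qed

lemma ymon_mem_var_ideal_iff:
  "ymon u \<in> var_ideal (mb_vars b)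
    \<longleftrightarrow> (\<exists>i. u i \<noteq> 0 \<and> 0 \<le> b i \<and> b i \<le> int (degree (u i)))"
proof -
  have "Poly_Mapping.keys (ymon_exp u) = {(i, j). coeff (u i) j \<noteq> 0}"
    by (auto simp: in_keys_iff lookup_ymon_exp)
  then have "mentions (mb_vars b) (ymon_exp u)
      \<longleftrightarrow> (\<exists>i j. coeff (u i) j \<noteq> 0 \<and> 0 \<le> b i \<and> b i \<le> int j)"
    by (auto simp: mentions_def mb_vars_def)
  also have "\<dots> \<longleftrightarrow> (\<exists>i. u i \<noteq> 0 \<and> 0 \<le> b i \<and> b i \<le> int (degree (u i)))"
    by (metis le_degree leading_coeff_neq_0 coeff_0 of_nat_le_iff order.trans)
  finally show ?thesis
    by (simp add: ymon_eq_single var_ideal_def)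
qed

text \<open>Membership of \<open>y\<^sup>u\<close> in an ideal \<open>\<mathfrak>m\<^sup>b\<close> depends only on the support of \<open>u\<close>
  and on the degrees of its components.\<close>

definition exp_le :: "('n \<Rightarrow> nat poly) \<Rightarrow> ('n \<Rightarrow> nat poly) \<Rightarrow> bool" where
  "exp_le u' u \<longleftrightarrow> (\<forall>i. u' i \<noteq> 0 \<longrightarrow> u i \<noteq> 0 \<and> degree (u' i) \<le> degree (u i))"

lemma ymon_mem_var_ideal_mono:
  "exp_le u' u \<Longrightarrow> ymon u' \<in> var_ideal (mb_vars b) \<Longrightarrow> ymon u \<in> var_ideal (mb_vars b)"
  unfolding ymon_mem_var_ideal_iff exp_le_def by (meson of_nat_le_iff order.trans)

definition covers :: "(('n \<times> nat) \<Rightarrow>\<^sub>0 nat) \<Rightarrow> ('n \<Rightarrow> nat poly) \<Rightarrow> bool" where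
  "covers m u \<longleftrightarrow> (\<forall>i. u i \<noteq> 0 \<longrightarrow> (\<exists>j. (i, j) \<in> Poly_Mapping.keys m \<and> degree (u i) \<le> j))"

definition colon :: "'a set \<Rightarrow> 'a::times \<Rightarrow> 'a set" where
  "colon I x = {a. a * x \<in> I}"

lemma colon_subset_mult:
  fixes x y x' y' :: "'a::comm_monoid_mult"
  assumes "colon I x \<subseteq> colon I y" "colon I x' \<subseteq> colon I y'"
  shows "colon I (x * x') \<subseteq> colon I (y * y')"
proof
  fix a
  assume "a \<in> colon I (x * x')"
  then have "a * x' \<in> colon I x"
    by (simp add: colon_def ac_simps)
  then have "a * x' \<in> colon I y"
    using assms(1) by blast
  then have "a * y \<in> colon I x'"
    by (simp add: colon_def ac_simps)
  then have "a * y \<in> colon I y'"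
    using assms(2) by blast
  then show "a \<in> colon I (y * y')"
    by (simp add: colon_def ac_simps)
qed

lemma colon_subset_power:
  fixes x y :: "'a::comm_monoid_mult"
  shows "colon I x \<subseteq> colon I y \<Longrightarrow> colon I (x ^ n) \<subseteq> colon I (y ^ n)"
  by (induction n) (simp_all add: colon_subset_mult)

lemma colon_subset_prod:
  fixes f g :: "'b \<Rightarrow> 'a::comm_monoid_mult"
  shows "(\<And>t. t \<in> A \<Longrightarrow> colon I (f t) \<subseteq> colon I (g t)) \<Longrightarrow> colon I (prod f A) \<subseteq> colon I (prod g A)"
  by (induction A rule: infinite_finite_induct) (simp_all add: colon_subset_mult)

lemma colon_dvar_mono:
  assumes wm: "well_mixed \<sigma> I" and \<sigma>1: "\<sigma> 1 = 1" and "j \<le> j'"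
  shows "colon I (dvar i j) \<subseteq> colon I (dvar i j')"
  using \<open>j \<le> j'\<close>
proof (induction j' rule: dec_induct)
  case (step k)
  have "colon I (dvar i k) \<subseteq> colon I (sigmaR \<sigma> (dvar i k))"
    using wm by (auto simp: colon_def well_mixed_def)
  then have "colon I (dvar i k) \<subseteq> colon I (dvar i (Suc k))"
    by (simp add: sigmaR_dvar[of \<sigma>, OF \<sigma>1])
  with step show ?case
    by blast
qed simp

text \<open>Well-mixedness moves each variable \<open>\<sigma>\<^sup>j(y\<^sub>i)\<close> of \<open>y\<^sup>u\<close> up to any \<open>\<sigma>\<^sup>J\<^sup>\<^sub>i(y\<^sub>i)\<close>
  with \<open>J\<^sub>i \<ge> j\<close>, one factor at a time, without leaving the ideal.\<close>

lemma shifted_ymon_mem: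
  fixes I :: "('n::finite, 'a::field) dpoly set"
  assumes wm: "well_mixed \<sigma> I" and \<sigma>1: "\<sigma> 1 = 1" and u: "ymon u \<in> I"
    and J: "\<And>i. u i \<noteq> 0 \<Longrightarrow> degree (u i) \<le> J i"
  shows "(\<Prod>i\<in>UNIV. \<Prod>j\<le>degree (u i). dvar i (J i) ^ coeff (u i) j) \<in> I"
    (is "?y \<in> I")
proof -
  have "colon I (ymon u) \<subseteq> colon I ?y"
    unfolding ymon_def
  proof (intro colon_subset_prod)
    fix i j
    assume j: "j \<in> {..degree (u i)}"
    show "colon I (dvar i j ^ coeff (u i) j) \<subseteq> colon I (dvar i (J i) ^ coeff (u i) j)"
    proof (cases "coeff (u i) j = 0")
      case False
      then have "j \<le> J i"
        using J[of i] j by fastforce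
      then show ?thesis
        by (intro colon_subset_power colon_dvar_mono[OF wm \<sigma>1])
    qed simp
  qed
  moreover have "1 \<in> colon I (ymon u)"
    using u by (simp add: colon_def)
  ultimately have "1 \<in> colon I ?y"
    by blast
  then show ?thesis
    by (simp add: colon_def)
qed

text \<open>The shifted monomial divides a power of every monomial covering \<open>u\<close>;
  radicality finishes.\<close>

lemma single_mem_if_covers:
  fixes I :: "('n::finite, 'a::field) dpoly set"
  assumes I: "is_ideal I" "well_mixed \<sigma> I" "radical_set I" and \<sigma>1: "\<sigma> 1 = 1"
    and u: "ymon u \<in> I" and cov: "covers m u"
  shows "Poly_Mapping.single m c \<in> I"
proof -
  obtain J where J: "\<And>i. u i \<noteq> 0 \<Longrightarrow> (i, J i) \<in> Poly_Mapping.keys m \<and> degree (u i) \<le> J i"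
    using cov unfolding covers_def by metis
  define y :: "('n, 'a) dpoly" where "y = (\<Prod>i\<in>UNIV. \<Prod>j\<le>degree (u i). dvar i (J i) ^ coeff (u i) j)"
  define n where "n = (\<Sum>i\<in>UNIV. \<Sum>j\<le>degree (u i). coeff (u i) j)"
  have "y \<in> I"
    unfolding y_def using J by (intro shifted_ymon_mem[OF I(2) \<sigma>1 u]) blast
  have "y dvd Poly_Mapping.single m 1 ^ n"
    unfolding y_def n_def power_sum
  proof (intro prod_dvd_prod)
    fix i j
    show "dvar i (J i) ^ coeff (u i) j dvd Poly_Mapping.single m 1 ^ coeff (u i) j"
    proof (cases "coeff (u i) j = 0")
      case False
      then have "u i \<noteq> 0"
        by auto
      then show ?thesis
        using J[of i] by (intro dvd_power_same dvar_dvd_single) auto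
    qed simp
  qed
  moreover have "Poly_Mapping.single m c ^ Suc n
      = Poly_Mapping.single m c * Poly_Mapping.single 0 c ^ n * Poly_Mapping.single m 1 ^ n"
    by (simp add: mult_single power_mult_distrib[symmetric] mult.assoc)
  ultimately have "Poly_Mapping.single m c ^ Suc n \<in> I"
    using dvd_mem_ideal[OF I(1) \<open>y \<in> I\<close>] by (metis dvd_mult)
  then show ?thesis
    using I(3) unfolding radical_set_def by (metis le_add1 plus_1_eq_Suc)
qed

section \<open>Decomposition\<close>

lemma dickson_insert:
  fixes D :: "('i \<Rightarrow> nat) set"
  assumes IH: "\<And>D. \<exists>M\<subseteq>D. finite M \<and> (\<forall>d\<in>D. \<exists>m\<in>M. \<forall>i\<in>Js. m i \<le> (d i :: nat))"
  shows "\<exists>M\<subseteq>D. finite M \<and> (\<forall>d\<in>D. \<exists>m\<in>M. \<forall>i\<in>insert j Js. m i \<le> d i)"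
proof -
  obtain M0 where M0: "M0 \<subseteq> D" "finite M0" "\<forall>d\<in>D. \<exists>m\<in>M0. \<forall>i\<in>Js. m i \<le> d i"
    using IH[of D] by (elim exE conjE) (rule that)
  have "\<forall>t. \<exists>Mt. Mt \<subseteq> {d\<in>D. d j = t} \<and> finite Mt
      \<and> (\<forall>d\<in>{d\<in>D. d j = t}. \<exists>m\<in>Mt. \<forall>i\<in>Js. m i \<le> d i)"
    by (intro allI IH)
  then obtain Mf where Mf: "\<forall>t. Mf t \<subseteq> {d\<in>D. d j = t} \<and> finite (Mf t)
      \<and> (\<forall>d\<in>{d\<in>D. d j = t}. \<exists>m\<in>Mf t. \<forall>i\<in>Js. m i \<le> d i)"
    by (elim choice[THEN exE]) (rule that)
  text \<open>Beyond the bound \<open>K\<close> the \<open>j\<close>-th coordinate is dominated by every element of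
    \<open>M0\<close>; each of the finitely many values below \<open>K\<close> is handled by its own basis.\<close>
  define K where "K = Max (insert 0 ((\<lambda>m. m j) ` M0))"
  have K: "m j \<le> K" if "m \<in> M0" for m
    unfolding K_def using M0(2) that by (intro Max_ge) auto
  define M where "M = M0 \<union> (\<Union>t<K. Mf t)"
  have "\<exists>m\<in>M. \<forall>i\<in>insert j Js. m i \<le> d i" if d: "d \<in> D" for d
  proof (cases "K \<le> d j")
    case True
    obtain m where m: "m \<in> M0" "\<forall>i\<in>Js. m i \<le> d i"
      using M0(3) d by blast
    moreover have "m j \<le> d j"
      using K[OF m(1)] True by simp
    moreover have "m \<in> M"
      using m(1) by (simp add: M_def)
    ultimately show ?thesis
      by auto
  next
    case False
    have "d \<in> {d\<in>D. d j = d j}"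
      using d by simp
    then obtain m where m: "m \<in> Mf (d j)" "\<forall>i\<in>Js. m i \<le> d i"
      using Mf by blast
    moreover have "m j = d j"
      using m(1) Mf by blast
    moreover have "m \<in> M"
      using False m(1) by (auto simp: M_def)
    ultimately show ?thesis
      by (metis insert_iff order_refl)
  qed
  moreover have "M \<subseteq> D"
    using M0(1) Mf by (auto simp: M_def)
  moreover have "finite M"
    using M0(2) Mf by (simp add: M_def)
  ultimately show ?thesis
    by blast
qed

lemma dickson:
  fixes D :: "('i \<Rightarrow> nat) set"
  assumes "finite Js"
  shows "\<exists>M\<subseteq>D. finite M \<and> (\<forall>d\<in>D. \<exists>m\<in>M. \<forall>i\<in>Js. m i \<le> d i)"
  using assms
proof (induction Js arbitrary: D rule: finite_induct)
  case empty
  show ?case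
  proof (cases "D = {}")
    case False
    then obtain d where "d \<in> D"
      by blast
    then have "{d} \<subseteq> D"
      by simp
    then show ?thesis
      by blast
  qed simp
next
  case (insert j Js)
  show ?case
    by (rule dickson_insert[OF insert.IH])
qed

lemma finite_exp_basis:
  fixes S :: "('n::finite \<Rightarrow> nat poly) set"
  obtains M where "M \<subseteq> S" "finite M" "\<And>u. u \<in> S \<Longrightarrow> \<exists>u'\<in>M. exp_le u' u"
proof -
  define code :: "('n \<Rightarrow> nat poly) \<Rightarrow> 'n \<Rightarrow> nat"
    where "code u i = (if u i = 0 then 0 else Suc (degree (u i)))" for u i
  have exp_le_code: "exp_le u' u" if le: "\<forall>i. code u' i \<le> code u i" for u u'
    unfolding exp_le_def
  proof (intro allI impI)
    fix i
    assume "u' i \<noteq> 0"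
    with le[rule_format, of i] show "u i \<noteq> 0 \<and> degree (u' i) \<le> degree (u i)"
      by (auto simp: code_def split: if_splits)
  qed
  have "\<exists>C\<subseteq>code ` S. finite C \<and> (\<forall>d\<in>code ` S. \<exists>c\<in>C. \<forall>i\<in>UNIV. c i \<le> d i)"
    by (rule dickson) simp
  then obtain C where C: "C \<subseteq> code ` S" "finite C" "\<forall>d\<in>code ` S. \<exists>c\<in>C. \<forall>i\<in>UNIV. c i \<le> d i"
    by (elim exE conjE) (rule that)
  obtain M where M: "M \<subseteq> S" "finite M" "C = code ` M"
    using finite_subset_image[OF C(2,1)] by blast
  have "\<exists>u'\<in>M. exp_le u' u" if "u \<in> S" for u
  proof -
    have "code u \<in> code ` S"
      using that by (rule imageI)
    then obtain c where c: "c \<in> C" "\<forall>i\<in>UNIV. c i \<le> code u i"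
      using bspec[OF C(3)] by blast
    obtain u' where u': "u' \<in> M" "c = code u'"
      using c(1) unfolding M(3) by (rule imageE)
    have "exp_le u' u"
      using c(2) u'(2) by (intro exp_le_code) simp
    with u'(1) show ?thesis
      by blast
  qed
  with M(1,2) show ?thesis
    by (rule that)
qed

text \<open>The candidate components of the exponents \<open>b\<close> in the decomposition.\<close>

definition exp_values :: "('n \<Rightarrow> nat poly) set \<Rightarrow> int set" where
  "exp_values M = insert (-1) {int (degree (u i)) | u i. u \<in> M}"

lemma finite_exp_values:
  fixes M :: "('n::finite \<Rightarrow> nat poly) set"
  assumes "finite M"
  shows "finite (exp_values M)"
proof -
  have "exp_values M = insert (-1) ((\<lambda>(u, i). int (degree (u i))) ` (M \<times> UNIV))"
    by (auto simp: exp_values_def)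
  then show ?thesis
    using assms by simp
qed

lemma exp_values_ge: "c \<in> exp_values M \<Longrightarrow> -1 \<le> c"
  by (auto simp: exp_values_def)

lemma valid_b_if_range: "range b \<subseteq> exp_values M \<Longrightarrow> valid_b b"
  unfolding valid_b_def using exp_values_ge by blast

text \<open>A monomial \<open>m\<close> covering no exponent of \<open>M\<close> is separated from all \<open>y\<^sup>u\<close>, \<open>u \<in> M\<close>,
  by \<open>\<mathfrak>m\<^sup>b\<close> with \<open>b\<^sub>i\<close> the least degree of an \<open>i\<close>-th component that \<open>m\<close> fails to cover.\<close>

definition uncovered_degrees :: "('n \<Rightarrow> nat poly) set \<Rightarrow> (('n \<times> nat) \<Rightarrow>\<^sub>0 nat) \<Rightarrow> 'n \<Rightarrow> int set" where
  "uncovered_degrees M m i = {int (degree (u i)) | u. u \<in> M \<and> u i \<noteq> 0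
      \<and> \<not> (\<exists>j. (i, j) \<in> Poly_Mapping.keys m \<and> degree (u i) \<le> j)}"

definition separating_exp :: "('n \<Rightarrow> nat poly) set \<Rightarrow> (('n \<times> nat) \<Rightarrow>\<^sub>0 nat) \<Rightarrow> 'n \<Rightarrow> int" where
  "separating_exp M m i =
    (if uncovered_degrees M m i = {} then -1 else Min (uncovered_degrees M m i))"

lemma finite_uncovered_degrees: "finite M \<Longrightarrow> finite (uncovered_degrees M m i)"
  unfolding uncovered_degrees_def by simp

lemma uncovered_degrees_nonneg: "z \<in> uncovered_degrees M m i \<Longrightarrow> 0 \<le> z"
  by (auto simp: uncovered_degrees_def)

lemma separating_exp_mem:
  "finite M \<Longrightarrow> uncovered_degrees M m i \<noteq> {} \<Longrightarrow> separating_exp M m i \<in> uncovered_degrees M m i"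
  by (simp add: separating_exp_def finite_uncovered_degrees)

lemma range_separating_exp:
  assumes "finite M"
  shows "range (separating_exp M m) \<subseteq> exp_values M"
proof
  fix c
  assume "c \<in> range (separating_exp M m)"
  then obtain i where c: "c = separating_exp M m i"
    by blast
  show "c \<in> exp_values M"
  proof (cases "uncovered_degrees M m i = {}")
    case True
    then show ?thesis
      using c by (simp add: separating_exp_def exp_values_def)
  next
    case False
    then show ?thesis
      using separating_exp_mem[OF assms False] c
      unfolding uncovered_degrees_def exp_values_def by blast
  qed
qed

lemma not_mentions_separating_exp:
  fixes M :: "('n \<Rightarrow> nat poly) set"
  assumes "finite M"
  shows "\<not> mentions (mb_vars (separating_exp M m)) m"
proof
  let ?b = "separating_exp M m"
  assume "mentions (mb_vars ?b) m"
  then obtain i j where ij: "(i, j) \<in> Poly_Mapping.keys m" "0 \<le> ?b i" "?b i \<le> int j"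
    by (auto simp: mentions_def mb_vars_def)
  then have "uncovered_degrees M m i \<noteq> {}"
    unfolding separating_exp_def by (cases "uncovered_degrees M m i = {}") simp_all
  then have "?b i \<in> uncovered_degrees M m i"
    by (rule separating_exp_mem[OF assms])
  then obtain u :: "'n \<Rightarrow> nat poly" where "?b i = int (degree (u i))"
    "\<not> (\<exists>j. (i, j) \<in> Poly_Mapping.keys m \<and> degree (u i) \<le> j)"
    unfolding uncovered_degrees_def by blast
  with ij show False
    by simp
qed

lemma separating_exp_meets:
  assumes "finite M" "u \<in> M" "\<not> covers m u"
  shows "\<exists>i. u i \<noteq> 0 \<and> 0 \<le> separating_exp M m i \<and> separating_exp M m i \<le> int (degree (u i))"
proof -
  obtain i where i: "u i \<noteq> 0" "\<not> (\<exists>j. (i, j) \<in> Poly_Mapping.keys m \<and> degree (u i) \<le> j)"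
    using assms(3) by (auto simp: covers_def)
  with assms(2) have deg: "int (degree (u i)) \<in> uncovered_degrees M m i"
    unfolding uncovered_degrees_def by blast
  then have "separating_exp M m i = Min (uncovered_degrees M m i)"
    by (auto simp: separating_exp_def)
  moreover have "Min (uncovered_degrees M m i) \<in> uncovered_degrees M m i"
    using deg finite_uncovered_degrees[OF assms(1)] by (intro Min_in) auto
  then have "0 \<le> Min (uncovered_degrees M m i)"
    by (rule uncovered_degrees_nonneg)
  moreover have "Min (uncovered_degrees M m i) \<le> int (degree (u i))"
    using deg finite_uncovered_degrees[OF assms(1)] by simp
  ultimately show ?thesis
    using i(1) by auto
qed

lemma rwm_closure_least:
  "sigma_ideal \<sigma> J \<Longrightarrow> well_mixed \<sigma> J \<Longrightarrow> radical_set J \<Longrightarrow> F \<subseteq> J \<Longrightarrow> rwm_closure \<sigma> F \<subseteq> J"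
  unfolding rwm_closure_def by blast

lemma is_ideal_rwm_closure: "is_ideal (rwm_closure \<sigma> F)"
  unfolding rwm_closure_def sigma_ideal_def is_ideal_def by blast

lemma well_mixed_rwm_closure: "well_mixed \<sigma> (rwm_closure \<sigma> F)"
  unfolding rwm_closure_def well_mixed_def by blast

lemma radical_set_rwm_closure: "radical_set (rwm_closure \<sigma> F)"
  unfolding rwm_closure_def radical_set_def by blast

lemma subset_rwm_closure: "F \<subseteq> rwm_closure \<sigma> F"
  unfolding rwm_closure_def by blast

lemma rwm_closure_ymon_subset_mb:
  fixes \<sigma> :: "'a::field \<Rightarrow> 'a" and S :: "('n::finite \<Rightarrow> nat poly) set"
  assumes endo: "ring_endo \<sigma>" and b: "valid_b b" and S: "\<forall>u\<in>S. ymon u \<in> mb \<sigma> b"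
  shows "rwm_closure \<sigma> (ymon ` S) \<subseteq> mb \<sigma> b"
proof -
  have shift_closed: "(i, j) \<in> mb_vars b \<Longrightarrow> (i, Suc j) \<in> mb_vars b" for i j
    by (simp add: mb_vars_def)
  show ?thesis
    using S unfolding mb_eq_var_ideal[OF endo b]
    by (intro rwm_closure_least sigma_ideal_var_ideal[OF shift_closed]
        well_mixed_var_ideal[OF shift_closed] radical_set_var_ideal) auto
qed

text \<open>Each monomial of an element of the intersection covers some exponent of \<open>M\<close>,
  since otherwise its separating exponent gives an intersectand avoiding it.\<close>

lemma Inter_mb_subset_rwm_closure:
  fixes \<sigma> :: "'a::field \<Rightarrow> 'a" and S M :: "('n::finite \<Rightarrow> nat poly) set"
  assumes endo: "ring_endo \<sigma>" and M: "M \<subseteq> S" "finite M"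
  shows "(\<Inter>b\<in>{b. range b \<subseteq> exp_values M \<and> (\<forall>u\<in>M. ymon u \<in> mb \<sigma> b)}. mb \<sigma> b)
    \<subseteq> rwm_closure \<sigma> (ymon ` S)"
proof
  fix f
  assume f: "f \<in> (\<Inter>b\<in>{b. range b \<subseteq> exp_values M \<and> (\<forall>u\<in>M. ymon u \<in> mb \<sigma> b)}. mb \<sigma> b)"
  have "Poly_Mapping.single m (Poly_Mapping.lookup f m) \<in> rwm_closure \<sigma> (ymon ` S)"
    if m: "m \<in> Poly_Mapping.keys f" for m
  proof (cases "\<exists>u\<in>M. covers m u")
    case True
    then obtain u where "u \<in> M" "covers m u"
      by blast
    moreover have "ymon u \<in> rwm_closure \<sigma> (ymon ` S)"
      using \<open>u \<in> M\<close> M(1) subset_rwm_closure by blast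
    ultimately show ?thesis
      using endo
      by (intro single_mem_if_covers[of _ \<sigma>] is_ideal_rwm_closure well_mixed_rwm_closure
          radical_set_rwm_closure) (auto simp: ring_endo_def)
  next
    case False
    let ?b = "separating_exp M m"
    have valid: "valid_b ?b"
      by (rule valid_b_if_range[OF range_separating_exp[OF M(2)]])
    have "\<forall>u\<in>M. ymon u \<in> mb \<sigma> ?b"
      using False separating_exp_meets[OF M(2)]
      by (simp add: mb_eq_var_ideal[OF endo valid] ymon_mem_var_ideal_iff)
    then have "f \<in> mb \<sigma> ?b"
      using f range_separating_exp[OF M(2)] by blast
    then have "f \<in> var_ideal (mb_vars ?b)"
      by (simp add: mb_eq_var_ideal[OF endo valid])
    with m have "mentions (mb_vars ?b) m"
      by (simp add: var_ideal_def)
    with not_mentions_separating_exp[OF M(2), of m] show ?thesis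
      by (rule notE)
  qed
  then have "(\<Sum>m\<in>Poly_Mapping.keys f. Poly_Mapping.single m (Poly_Mapping.lookup f m))
      \<in> rwm_closure \<sigma> (ymon ` S)"
    by (intro sum_mem_ideal is_ideal_rwm_closure)
  then show "f \<in> rwm_closure \<sigma> (ymon ` S)"
    by (simp flip: poly_mapping_sum_single)
qed

lemma rwm_closure_ymon_eq_Inter_mb:
  fixes \<sigma> :: "'a::field \<Rightarrow> 'a" and S M :: "('n::finite \<Rightarrow> nat poly) set"
  assumes endo: "ring_endo \<sigma>" and M: "M \<subseteq> S" "finite M" "\<And>u. u \<in> S \<Longrightarrow> \<exists>u'\<in>M. exp_le u' u"
  shows "rwm_closure \<sigma> (ymon ` S)
    = (\<Inter>b\<in>{b. range b \<subseteq> exp_values M \<and> (\<forall>u\<in>M. ymon u \<in> mb \<sigma> b)}. mb \<sigma> b)"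
proof (intro equalityI INT_greatest)
  fix b
  assume "b \<in> {b. range b \<subseteq> exp_values M \<and> (\<forall>u\<in>M. ymon u \<in> mb \<sigma> b)}"
  then have b: "valid_b b" "\<forall>u\<in>M. (ymon u :: ('n, 'a) dpoly) \<in> var_ideal (mb_vars b)"
    using valid_b_if_range by (auto simp: mb_eq_var_ideal[OF endo valid_b_if_range])
  have "ymon u \<in> mb \<sigma> b" if "u \<in> S" for u
    using M(3)[OF that] b ymon_mem_var_ideal_mono by (metis mb_eq_var_ideal[OF endo b(1)])
  then show "rwm_closure \<sigma> (ymon ` S) \<subseteq> mb \<sigma> b"
    using rwm_closure_ymon_subset_mb[OF endo b(1)] by blast
qed (rule Inter_mb_subset_rwm_closure[OF endo M(1,2)])

lemma rwm_closure_ymon_decomposition: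
  fixes \<sigma> :: "'a::field \<Rightarrow> 'a" and S :: "('n::finite \<Rightarrow> nat poly) set"
  assumes endo: "ring_endo \<sigma>"
  shows "\<exists>B. finite B \<and> (\<forall>b\<in>B. valid_b b) \<and> rwm_closure \<sigma> (ymon ` S) = (\<Inter>b\<in>B. mb \<sigma> b)"
proof -
  obtain M where M: "M \<subseteq> S" "finite M" "\<And>u. u \<in> S \<Longrightarrow> \<exists>u'\<in>M. exp_le u' u"
    using finite_exp_basis[of S] by blast
  define B where "B = {b. range b \<subseteq> exp_values M \<and> (\<forall>u\<in>M. ymon u \<in> mb \<sigma> b)}"
  have "B \<subseteq> {b. \<forall>i. (i \<in> UNIV \<longrightarrow> b i \<in> exp_values M) \<and> (i \<notin> UNIV \<longrightarrow> b i = 0)}"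
    by (auto simp: B_def)
  moreover have "finite {b :: 'n \<Rightarrow> int. \<forall>i. (i \<in> UNIV \<longrightarrow> b i \<in> exp_values M) \<and> (i \<notin> UNIV \<longrightarrow> b i = 0)}"
    by (rule finite_set_of_finite_funs) (simp_all add: finite_exp_values M(2))
  ultimately have "finite B"
    by (rule finite_subset)
  moreover have "\<forall>b\<in>B. valid_b b"
  proof
    fix b
    assume "b \<in> B"
    then have "range b \<subseteq> exp_values M"
      by (simp add: B_def)
    then show "valid_b b"
      by (rule valid_b_if_range)
  qed
  moreover have "rwm_closure \<sigma> (ymon ` S) = (\<Inter>b\<in>B. mb \<sigma> b)"
    unfolding B_def by (rule rwm_closure_ymon_eq_Inter_mb[OF endo M])
  ultimately show ?thesis
    by blast
qed

section \<open>Uniqueness of irredundant decompositions\<close>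

lemma Inter_var_ideal_subset:
  fixes V :: "'b \<Rightarrow> 'k::countable set"
  assumes "finite B"
    and sub: "(\<Inter>c\<in>B. var_ideal (V c)) \<subseteq> (var_ideal W :: (('k \<Rightarrow>\<^sub>0 nat) \<Rightarrow>\<^sub>0 'a::idom) set)"
  shows "\<exists>c\<in>B. (var_ideal (V c) :: (('k \<Rightarrow>\<^sub>0 nat) \<Rightarrow>\<^sub>0 'a) set) \<subseteq> var_ideal W"
proof (rule ccontr)
  assume "\<not> ?thesis"
  then have "\<forall>c\<in>B. \<exists>p. p \<in> var_ideal (V c) \<and> p \<notin> (var_ideal W :: (('k \<Rightarrow>\<^sub>0 nat) \<Rightarrow>\<^sub>0 'a) set)"
    by blast
  then obtain g :: "'b \<Rightarrow> ('k \<Rightarrow>\<^sub>0 nat) \<Rightarrow>\<^sub>0 'a"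
    where g: "\<forall>c\<in>B. g c \<in> var_ideal (V c) \<and> g c \<notin> var_ideal W"
    by (elim bchoice[THEN exE])
  have "prod g B \<in> var_ideal (V c)" if c: "c \<in> B" for c
  proof -
    have "prod g B = g c * prod g (B - {c})"
      using prod.remove[OF \<open>finite B\<close> c] .
    then show ?thesis
      using bspec[OF g c] by (simp add: mult_mem_var_ideal(2))
  qed
  then have "prod g B \<in> (\<Inter>c\<in>B. var_ideal (V c))"
    by (rule INT_I)
  then have "prod g B \<in> var_ideal W"
    using sub by (rule subsetD[rotated])
  then obtain c where "c \<in> B" "g c \<in> var_ideal W"
    using prod_mem_var_ideal[OF \<open>finite B\<close>] by blast
  with g show False
    by blast
qed

lemma mb_Inter_subset_mb:
  fixes \<sigma> :: "'a::field \<Rightarrow> 'a" and B :: "('n::countable \<Rightarrow> int) set"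
  assumes endo: "ring_endo \<sigma>" and "finite B" "\<forall>c\<in>B. valid_b c" "valid_b b"
    and sub: "(\<Inter>c\<in>B. mb \<sigma> c) \<subseteq> mb \<sigma> b"
  shows "\<exists>c\<in>B. mb \<sigma> c \<subseteq> mb \<sigma> b"
proof -
  have "(\<Inter>c\<in>B. var_ideal (mb_vars c)) \<subseteq> (var_ideal (mb_vars b) :: ('n, 'a) dpoly set)"
    using sub assms(3,4) by (simp add: mb_eq_var_ideal[OF endo])
  then obtain c where "c \<in> B" "(var_ideal (mb_vars c) :: ('n, 'a) dpoly set) \<subseteq> var_ideal (mb_vars b)"
    using Inter_var_ideal_subset[OF \<open>finite B\<close>] by blast
  then show ?thesis
    using assms(3,4) by (auto simp: mb_eq_var_ideal[OF endo])
qed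

lemma irredundant_Inter_image_subset:
  fixes P :: "'b \<Rightarrow> 'c set"
  assumes below: "\<forall>b\<in>B1. \<exists>c\<in>B2. P c \<subseteq> P b" and above: "\<forall>c\<in>B2. \<exists>b\<in>B1. P b \<subseteq> P c"
    and irredundant: "\<forall>b\<in>B1. (\<Inter>c\<in>B1 - {b}. P c) \<noteq> (\<Inter>c\<in>B1. P c)"
  shows "P ` B1 \<subseteq> P ` B2"
proof
  fix Q
  assume "Q \<in> P ` B1"
  then obtain b where b: "b \<in> B1" "Q = P b"
    by blast
  then obtain c where c: "c \<in> B2" "P c \<subseteq> P b"
    using below by blast
  then obtain b' where b': "b' \<in> B1" "P b' \<subseteq> P c"
    using above by blast
  have "b' = b"
  proof (rule ccontr)
    assume "b' \<noteq> b"
    then have "(\<Inter>c\<in>B1 - {b}. P c) \<subseteq> P b"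
      using b' c by blast
    then have "(\<Inter>c\<in>B1 - {b}. P c) = (\<Inter>c\<in>B1. P c)"
      using b(1) by blast
    with irredundant b(1) show False
      by blast
  qed
  with b b' c show "Q \<in> P ` B2"
    by blast
qed

lemma irredundant_mb_decomposition_unique:
  fixes \<sigma> :: "'a::field \<Rightarrow> 'a" and B1 B2 :: "('n::countable \<Rightarrow> int) set"
  assumes endo: "ring_endo \<sigma>"
    and B1: "finite B1" "\<forall>b\<in>B1. valid_b b" "\<forall>b\<in>B1. (\<Inter>c\<in>B1 - {b}. mb \<sigma> c) \<noteq> (\<Inter>c\<in>B1. mb \<sigma> c)"
    and B2: "finite B2" "\<forall>b\<in>B2. valid_b b" "\<forall>b\<in>B2. (\<Inter>c\<in>B2 - {b}. mb \<sigma> c) \<noteq> (\<Inter>c\<in>B2. mb \<sigma> c)"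
    and eq: "(\<Inter>b\<in>B1. mb \<sigma> b) = (\<Inter>b\<in>B2. mb \<sigma> b)"
  shows "mb \<sigma> ` B1 = mb \<sigma> ` B2"
proof -
  have "\<forall>b\<in>B1. \<exists>c\<in>B2. mb \<sigma> c \<subseteq> mb \<sigma> b"
    using eq B1(2) by (auto intro!: mb_Inter_subset_mb[OF endo B2(1,2)])
  moreover have "\<forall>c\<in>B2. \<exists>b\<in>B1. mb \<sigma> b \<subseteq> mb \<sigma> c"
    using eq B2(2) by (auto intro!: mb_Inter_subset_mb[OF endo B1(1,2)])
  ultimately show ?thesis
    using B1(3) B2(3) by (intro equalityI irredundant_Inter_image_subset) auto
qed

theorem theorem5p4:
  fixes \<sigma> :: "'a::field_char_0 \<Rightarrow> 'a"
    and S :: "('n::finite \<Rightarrow> nat poly) set"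
    and I :: "('n, 'a) dpoly set"
  assumes endo: "ring_endo \<sigma>"
    and I_def: "I = rwm_closure \<sigma> (ymon ` S)"
  shows "(\<exists>B. finite B \<and> (\<forall>b\<in>B. valid_b b) \<and> I = (\<Inter>b\<in>B. mb \<sigma> b))
    \<and> (\<forall>B1 B2. finite B1 \<and> (\<forall>b\<in>B1. valid_b b) \<and> I = (\<Inter>b\<in>B1. mb \<sigma> b)
                \<and> (\<forall>b\<in>B1. (\<Inter>c\<in>B1 - {b}. mb \<sigma> c) \<noteq> I)
           \<longrightarrow> finite B2 \<and> (\<forall>b\<in>B2. valid_b b) \<and> I = (\<Inter>b\<in>B2. mb \<sigma> b)
                \<and> (\<forall>b\<in>B2. (\<Inter>c\<in>B2 - {b}. mb \<sigma> c) \<noteq> I)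
           \<longrightarrow> mb \<sigma> ` B1 = mb \<sigma> ` B2)"
proof (intro conjI allI impI)
  show "\<exists>B. finite B \<and> (\<forall>b\<in>B. valid_b b) \<and> I = (\<Inter>b\<in>B. mb \<sigma> b)"
    unfolding I_def by (rule rwm_closure_ymon_decomposition[OF endo])
next
  fix B1 B2 :: "('n \<Rightarrow> int) set"
  assume "finite B1 \<and> (\<forall>b\<in>B1. valid_b b) \<and> I = (\<Inter>b\<in>B1. mb \<sigma> b)
      \<and> (\<forall>b\<in>B1. (\<Inter>c\<in>B1 - {b}. mb \<sigma> c) \<noteq> I)"
    and "finite B2 \<and> (\<forall>b\<in>B2. valid_b b) \<and> I = (\<Inter>b\<in>B2. mb \<sigma> b)
      \<and> (\<forall>b\<in>B2. (\<Inter>c\<in>B2 - {b}. mb \<sigma> c) \<noteq> I)"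
  then show "mb \<sigma> ` B1 = mb \<sigma> ` B2"
    by (intro irredundant_mb_decomposition_unique[OF endo]) auto
qed

end
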